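(* In a finite dynamic game as described in the context, let $K=(K^i)_{i\in\mathcal{I}}$ be compressed information. Suppose that for every player $i$ and every profile $\rho^{-i}$ of $K^j$-based strategies of players $j\neq i$ there exist functions $\Phi_t^{i,\rho^{-i}}:\mathcal{K}_t^i\to\Delta(\mathcal{X}_t\times\mathcal{K}_t^{-i})$, $t\in\mathcal{T}$, such that $$\Pr^{g^i,\rho^{-i}}(x_t,k_t^{-i}\mid h_t^i)=\Phi_t^{i,\rho^{-i}}(x_t,k_t^{-i}\mid k_t^i)$$ for all behavioral strategies $g^i$ of player $i$, all $t\in\mathcal{T}$, and all $h_t^i$ admissible under $(g^i,\rho^{-i})$. Then $K$ is mutually sufficient information.
   Context: Game model: finite set of players $\mathcal{I}$, times $\mathcal{T}=\{1,\dots,T\}$. At time $t$ each player $i$ takes action $U_t^i\in\mathcal{U}_t^i$, obtains reward $R_t^i\in[-1,1]$ and learns new information $Z_t^i\in\mathcal{Z}_t^i$. There is a state $X_t\in\mathcal{X}_t$ with $(X_{t+1},Z_t,R_t)=f_t(X_t,U_t,W_t)$ for fixed functions $f_t$. Primitive random variables $(X_1,H_1)$ and $W_1,\dots,W_T$ are mutually independent with commonly known distributions. All sets are finite. Perfect recall: $H_t^i=(H_1^i,Z_{1:t-1}^i)\in\mathcal{H}_t^i$, and $U_t^i$ is a component of $Z_t^i$. Behavioral strategy $g_t^i:\mathcal{H}_t^i\to\Delta(\mathcal{U}_t^i)$. A realization is admissible under a partial profile if it has positive probability under some completion of it. Compression: $K_1^i=\iota_1^i(H_1^i)$, $K_t^i=\iota_t^i(K_{t-1}^i,Z_{t-1}^i)$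 for fixed maps, finite value sets $\mathcal{K}_t^i$; $k_t^i$ is the compression of $h_t^i$; $K_t^{-i}=(K_t^j)_{j\ne i}$; a $K^i$-based strategy has $\rho_t^i:\mathcal{K}_t^i\to\Delta(\mathcal{U}_t^i)$. Information state: given $g^{-i}$, $K^i$ is an information state under $g^{-i}$ if there exist $P_t^{i,g^{-i}}:\mathcal{K}_t^i\times\mathcal{U}_t^i\to\Delta(\mathcal{K}_{t+1}^i)$, $r_t^{i,g^{-i}}:\mathcal{K}_t^i\times\mathcal{U}_t^i\to[-1,1]$ (independent of $g^i$) with $\Pr^{g^i,g^{-i}}(k_{t+1}^i\mid h_t^i,u_t^i)=P_t^{i,g^{-i}}(k_{t+1}^i\mid k_t^i,u_t^i)$ ($t<T$) and $\mathbb{E}^{g^i,g^{-i}}[R_t^i\mid h_t^i,u_t^i]=r_t^{i,g^{-i}}(k_t^i,u_t^i)$ for all $g^i$ and all $(h_t^i,u_t^i)$ admissible under $(g^i,g^{-i})$. $K$ is mutually sufficient information if for every $i$ and every profile $\rho^{-i}$ of $K^j$-based strategies ($j\ne i$), $K^i$ is an information state under $\rho^{-i}$. *)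

theory Defs
  imports "HOL-Probability.Probability"
begin

(* A history of player i at time t: (H_1^i, [Z_1^i, ..., Z_{t-1}^i]) (perfect recall). *)
type_synonym ('h,'z) hist = "'h \<times> 'z list"

type_synonym ('i,'h,'z,'u) profile = "nat \<Rightarrow> 'i \<Rightarrow> ('h,'z) hist \<Rightarrow> 'u pmf"

(* dynamics f_t : X_t x U_t x W_t -> X_{t+1} x Z_t x R_t *)
type_synonym ('x,'i,'u,'w,'z) dynamics =
  "nat \<Rightarrow> 'x \<Rightarrow> ('i \<Rightarrow> 'u) \<Rightarrow> 'w \<Rightarrow> 'x \<times> ('i \<Rightarrow> 'z) \<times> ('i \<Rightarrow> real)"

definition act_prof :: "('i,'h,'z,'u) profile \<Rightarrow> nat \<Rightarrow> ('i \<Rightarrow> ('h,'z) hist) \<Rightarrow> ('i \<Rightarrow> 'u) pmf" where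
  "act_prof g t H = Pi_pmf UNIV undefined (\<lambda>j. g t j (H j))"

definition step_of :: "(nat \<Rightarrow> 'w pmf) \<Rightarrow> ('i,'h,'z,'u) profile \<Rightarrow> nat
    \<Rightarrow> ('x \<times> ('i \<Rightarrow> ('h,'z) hist)) pmf
    \<Rightarrow> ('x \<times> ('i \<Rightarrow> ('h,'z) hist) \<times> ('i \<Rightarrow> 'u) \<times> 'w) pmf" where
  "step_of \<nu> g t S =
     bind_pmf S (\<lambda>(x,H). bind_pmf (act_prof g t H) (\<lambda>u. map_pmf (\<lambda>w. (x,H,u,w)) (\<nu> t)))"

definition next_state :: "('x,'i,'u,'w,'z) dynamics \<Rightarrow> nat
    \<Rightarrow> 'x \<times> ('i \<Rightarrow> ('h,'z) hist) \<times> ('i \<Rightarrow> 'u) \<times> 'w \<Rightarrow> 'x \<times> ('i \<Rightarrow> ('h,'z) hist)" where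
  "next_state f t s = (case s of (x,H,u,w) \<Rightarrow>
     (case f t x u w of (x',z,r) \<Rightarrow> (x', \<lambda>j. (fst (H j), snd (H j) @ [z j]))))"

(* sd ... n = distribution of (X_{n+1}, H_{n+1}) *)
fun sd :: "('x \<times> ('i \<Rightarrow> 'h)) pmf \<Rightarrow> (nat \<Rightarrow> 'w pmf) \<Rightarrow> ('x,'i,'u,'w,'z) dynamics
    \<Rightarrow> ('i,'h,'z,'u) profile \<Rightarrow> nat \<Rightarrow> ('x \<times> ('i \<Rightarrow> ('h,'z) hist)) pmf" where
  "sd \<mu> \<nu> f g 0 = map_pmf (\<lambda>(x,h1). (x, \<lambda>j. (h1 j, []))) \<mu>"
| "sd \<mu> \<nu> f g (Suc n) = map_pmf (next_state f (Suc n)) (step_of \<nu> g (Suc n) (sd \<mu> \<nu> f g n))"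

definition state_at where "state_at \<mu> \<nu> f g t = sd \<mu> \<nu> f g (t - 1)"

definition step_at where "step_at \<mu> \<nu> f g t = step_of \<nu> g t (state_at \<mu> \<nu> f g t)"

definition next_hist :: "('x,'i,'u,'w,'z) dynamics \<Rightarrow> nat \<Rightarrow> 'i
    \<Rightarrow> 'x \<times> ('i \<Rightarrow> ('h,'z) hist) \<times> ('i \<Rightarrow> 'u) \<times> 'w \<Rightarrow> ('h,'z) hist" where
  "next_hist f t i s = snd (next_state f t s) i"

definition reward :: "('x,'i,'u,'w,'z) dynamics \<Rightarrow> nat \<Rightarrow> 'i
    \<Rightarrow> 'x \<times> ('i \<Rightarrow> ('h,'z) hist) \<times> ('i \<Rightarrow> 'u) \<times> 'w \<Rightarrow> real" where
  "reward f t i s = (case s of (x,H,u,w) \<Rightarrow> (case f t x u w of (x',z,r) \<Rightarrow> r i))"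

(* Compression: K_1^i = iota_1^i(H_1^i), K_t^i = iota_t^i(K_{t-1}^i, Z_{t-1}^i). *)
fun compr_aux :: "(nat \<Rightarrow> 'i \<Rightarrow> 'k \<Rightarrow> 'z \<Rightarrow> 'k) \<Rightarrow> 'i \<Rightarrow> 'k \<Rightarrow> nat \<Rightarrow> 'z list \<Rightarrow> 'k" where
  "compr_aux \<iota> i k t [] = k"
| "compr_aux \<iota> i k t (z # zs) = compr_aux \<iota> i (\<iota> (Suc t) i k z) (Suc t) zs"

definition compress :: "('i \<Rightarrow> 'h \<Rightarrow> 'k) \<Rightarrow> (nat \<Rightarrow> 'i \<Rightarrow> 'k \<Rightarrow> 'z \<Rightarrow> 'k) \<Rightarrow> 'i \<Rightarrow> ('h,'z) hist \<Rightarrow> 'k" where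
  "compress \<iota>1 \<iota> i h = compr_aux \<iota> i (\<iota>1 i (fst h)) 1 (snd h)"

definition behav_strat :: "(nat \<Rightarrow> 'i \<Rightarrow> 'u set) \<Rightarrow> nat \<Rightarrow> 'i \<Rightarrow> (nat \<Rightarrow> ('h,'z) hist \<Rightarrow> 'u pmf) \<Rightarrow> bool" where
  "behav_strat A T i gi \<longleftrightarrow> (\<forall>t\<in>{1..T}. \<forall>h. set_pmf (gi t h) \<subseteq> A t i)"

(* profile rho^{-i} of K^j-based strategies of the players j \<noteq> i (component i ignored) *)
definition kbased_others :: "(nat \<Rightarrow> 'i \<Rightarrow> 'u set) \<Rightarrow> nat \<Rightarrow> 'i \<Rightarrow> (nat \<Rightarrow> 'i \<Rightarrow> 'k \<Rightarrow> 'u pmf) \<Rightarrow> bool" where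
  "kbased_others A T i \<rho> \<longleftrightarrow> (\<forall>j. j \<noteq> i \<longrightarrow> (\<forall>t\<in>{1..T}. \<forall>k. set_pmf (\<rho> t j k) \<subseteq> A t j))"

definition join_prof :: "'i \<Rightarrow> (nat \<Rightarrow> ('h,'z) hist \<Rightarrow> 'u pmf) \<Rightarrow> ('i,'h,'z,'u) profile \<Rightarrow> ('i,'h,'z,'u) profile" where
  "join_prof i gi gm = (\<lambda>t j h. if j = i then gi t h else gm t j h)"

definition kprof :: "('i \<Rightarrow> 'h \<Rightarrow> 'k) \<Rightarrow> (nat \<Rightarrow> 'i \<Rightarrow> 'k \<Rightarrow> 'z \<Rightarrow> 'k) \<Rightarrow> (nat \<Rightarrow> 'i \<Rightarrow> 'k \<Rightarrow> 'u pmf) \<Rightarrow> ('i,'h,'z,'u) profile" where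
  "kprof \<iota>1 \<iota> \<rho> = (\<lambda>t j h. \<rho> t j (compress \<iota>1 \<iota> j h))"

(* K^i is an information state under g^{-i} (gm; its component i is ignored).
   Admissibility under the complete profile (g^i,g^{-i}) = positive probability. *)
definition info_state where
  "info_state \<mu> \<nu> f A T \<iota>1 \<iota> i gm \<longleftrightarrow>
    (\<exists>(P :: nat \<Rightarrow> 'k \<Rightarrow> 'u \<Rightarrow> 'k pmf) (r :: nat \<Rightarrow> 'k \<Rightarrow> 'u \<Rightarrow> real).
       (\<forall>t k a. r t k a \<in> {-1..1}) \<and>
       (\<forall>gi. behav_strat A T i gi \<longrightarrow>
          (\<forall>t\<in>{1..T}. \<forall>h a.
             let D = step_at \<mu> \<nu> f (join_prof i gi gm) t;
                 B = {s. fst (snd s) i = h \<and> fst (snd (snd s)) i = a}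
             in measure_pmf.prob D B > 0 \<longrightarrow>
                ((t < T \<longrightarrow> (\<forall>k'. measure_pmf.prob (cond_pmf D B)
                       {s. compress \<iota>1 \<iota> i (next_hist f t i s) = k'}
                     = pmf (P t (compress \<iota>1 \<iota> i h) a) k')) \<and>
                 measure_pmf.expectation (cond_pmf D B) (reward f t i)
                     = r t (compress \<iota>1 \<iota> i h) a))))"

definition mutually_sufficient where
  "mutually_sufficient \<mu> \<nu> f A T \<iota>1 \<iota> \<longleftrightarrow>
    (\<forall>i \<rho>. kbased_others A T i \<rho> \<longrightarrow> info_state \<mu> \<nu> f A T \<iota>1 \<iota> i (kprof \<iota>1 \<iota> \<rho>))"

(* well-formed finite game: U_t^i is a component of Z_t^i, rewards in [-1,1] *)
definition game_wf :: "('x,'i,'u,'w,'z) dynamics \<Rightarrow> (nat \<Rightarrow> 'i \<Rightarrow> 'u set) \<Rightarrow> (nat \<Rightarrow> 'i \<Rightarrow> 'z \<Rightarrow> 'u) \<Rightarrow> nat \<Rightarrow> bool" where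
  "game_wf f A actof T \<longleftrightarrow> (\<forall>t\<in>{1..T}. \<forall>x u w. (\<forall>j. u j \<in> A t j) \<longrightarrow>
      (case f t x u w of (x',z,r) \<Rightarrow> (\<forall>j. actof t j (z j) = u j) \<and> (\<forall>j. r j \<in> {-1..1})))"

end

(*
  Fix player i and compression-based strategies rho of the other players. Given player i's
  history h and action a at time t, the step (X_t, K_t^{-i}, U_t, W_t) arises by drawing
  (X_t, K_t^{-i}) from the belief Phi_t(k), where k is the compression of h, then the other
  players' actions independently from rho_t^j(K_t^j), and the noise W_t independently. Its
  conditional law therefore depends on h only through (k, a). Both the next compression
  K_{t+1}^i = iota(k, Z_t^i) and the reward R_t^i are functions of k and this step, so their
  conditional laws, too, depend only on (k, a): K^i is an information state.
*)
theory Submission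
  imports Defs
begin

section \<open>Conditioning probability mass functions\<close>

lemma set_pmf_Int_nonempty_if_prob_pos:
  "measure_pmf.prob p A > 0 \<Longrightarrow> set_pmf p \<inter> A \<noteq> {}"
  by (auto simp: measure_pmf_zero_iff[symmetric])

lemma nn_integral_indicator_cond_pmf:
  assumes "set_pmf p \<inter> B \<noteq> {}"
  shows "(\<integral>\<^sup>+x. F x * indicator B x \<partial>p) = emeasure p B * (\<integral>\<^sup>+x. F x \<partial>cond_pmf p B)"
proof -
  have "emeasure p B \<noteq> 0" "emeasure p B \<noteq> \<top>"
    using assms by (simp_all add: measure_pmf_zero_iff measure_pmf.emeasure_eq_measure)
  then show ?thesis
    using assms by (simp add: cond_pmf.rep_eq nn_integral_uniform_measure ennreal_times_divide
        mult.commute[of "emeasure p B"] mult_divide_eq_ennreal)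
qed

lemma map_cond_pmf_eqI:
  fixes Q :: "'b pmf"
  assumes ne: "set_pmf D \<inter> B \<noteq> {}"
    and law: "\<And>G. emeasure D (B \<inter> Y -` G) = c * emeasure Q G"
  shows "map_pmf Y (cond_pmf D B) = Q"
proof (rule pmf_eqI)
  fix y
  have "emeasure D B = c"
    using law[of UNIV] by (simp add: measure_pmf.emeasure_space_1)
  then have c: "c \<noteq> 0" "c \<noteq> \<top>"
    using ne by (auto simp: measure_pmf_zero_iff measure_pmf.emeasure_eq_measure)
  have "ennreal (pmf (map_pmf Y (cond_pmf D B)) y) = emeasure D (B \<inter> Y -` {y}) / emeasure D B"
    using ne by (simp add: emeasure_pmf_single[symmetric] cond_pmf.rep_eq)
  also have "\<dots> = ennreal (pmf Q y)"
    using law[of UNIV] law[of "{y}"] c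
    by (simp add: measure_pmf.emeasure_space_1 emeasure_pmf_single mult.commute[of c]
        mult_divide_eq_ennreal)
  finally show "pmf (map_pmf Y (cond_pmf D B)) y = pmf Q y"
    by simp
qed

lemma map_cond_pmf_bind_pmf:
  fixes K :: "'s \<Rightarrow> 'd pmf" and Q :: "'v \<Rightarrow> 'y pmf"
  assumes law: "\<And>s G. s \<in> set_pmf S \<Longrightarrow>
      emeasure (K s) (E \<inter> Y -` G) = c * indicator B s * emeasure (Q (V s)) G"
    and ne: "set_pmf (bind_pmf S K) \<inter> E \<noteq> {}"
  shows "map_pmf Y (cond_pmf (bind_pmf S K) E) = bind_pmf (map_pmf V (cond_pmf S B)) Q"
proof -
  have joint: "emeasure (bind_pmf S K) (E \<inter> Y -` G)
      = c * (\<integral>\<^sup>+s. emeasure (Q (V s)) G * indicator B s \<partial>S)" for G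
  proof -
    have "emeasure (bind_pmf S K) (E \<inter> Y -` G)
        = (\<integral>\<^sup>+s. c * (emeasure (Q (V s)) G * indicator B s) \<partial>S)"
      using law by (auto simp: AE_measure_pmf_iff mult_ac intro!: nn_integral_cong_AE)
    then show ?thesis
      by (simp add: nn_integral_cmult)
  qed
  have SB: "set_pmf S \<inter> B \<noteq> {}"
  proof
    assume "set_pmf S \<inter> B = {}"
    then have "emeasure S B = 0"
      by (simp add: measure_pmf.emeasure_eq_measure measure_pmf_zero_iff)
    then have "emeasure (bind_pmf S K) E = 0"
      using joint[of UNIV] by simp
    with ne show False
      by (simp add: measure_pmf.emeasure_eq_measure measure_pmf_zero_iff)
  qed
  show ?thesis
  proof (rule map_cond_pmf_eqI[OF ne, where c = "c * emeasure S B"])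
    fix G
    have "emeasure (bind_pmf S K) (E \<inter> Y -` G)
        = c * (emeasure S B * (\<integral>\<^sup>+s. emeasure (Q (V s)) G \<partial>cond_pmf S B))"
      unfolding joint nn_integral_indicator_cond_pmf[OF SB] ..
    also have "\<dots> = c * emeasure S B * emeasure (bind_pmf (map_pmf V (cond_pmf S B)) Q) G"
      by (simp add: mult_ac)
    finally show "emeasure (bind_pmf S K) (E \<inter> Y -` G)
        = c * emeasure S B * emeasure (bind_pmf (map_pmf V (cond_pmf S B)) Q) G" .
  qed
qed

lemma expectation_pmf_atLeastAtMost:
  fixes F :: "'a \<Rightarrow> real"
  assumes "\<And>x. x \<in> set_pmf p \<Longrightarrow> F x \<in> {a..b}"
  shows "measure_pmf.expectation p F \<in> {a..b}"
proof -
  have "integrable p F"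
    using assms
    by (intro measure_pmf.integrable_const_bound[where B = "\<bar>a\<bar> + \<bar>b\<bar>"])
      (fastforce simp: AE_measure_pmf_iff abs_le_iff)+
  then show ?thesis
    using assms
    by (auto simp: AE_measure_pmf_iff
        intro!: measure_pmf.integral_ge_const measure_pmf.integral_le_const)
qed

section \<open>Histories, compressions and rewards along the play\<close>

lemma length_hist_sd: "(x, H) \<in> set_pmf (sd \<mu> \<nu> f g n) \<Longrightarrow> length (snd (H j)) = n"
  by (induction n arbitrary: x H) (auto simp: step_of_def next_state_def split: prod.splits)

lemma compr_aux_snoc:
  "compr_aux \<iota> i k t (zs @ [z]) = \<iota> (Suc (t + length zs)) i (compr_aux \<iota> i k t zs) z"
  by (induction zs arbitrary: k t) auto

lemma set_pmf_act_prof: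
  fixes H :: "'i::finite \<Rightarrow> ('h,'z) hist"
  assumes "u \<in> set_pmf (act_prof g t H)"
  shows "u j \<in> set_pmf (g t j (H j))"
proof -
  have "set_pmf (act_prof g t H) = PiE_dflt UNIV undefined (set_pmf \<circ> (\<lambda>j. g t j (H j)))"
    unfolding act_prof_def by (rule set_Pi_pmf) simp
  with assms show ?thesis
    by (auto simp: PiE_dflt_def)
qed

lemma set_pmf_step_of:
  fixes S :: "('x \<times> ('i::finite \<Rightarrow> ('h,'z) hist)) pmf"
  assumes "s \<in> set_pmf (step_of \<nu> g t S)"
  shows "(fst s, fst (snd s)) \<in> set_pmf S" and "fst (snd (snd s)) j \<in> set_pmf (g t j (fst (snd s) j))"
proof -
  obtain x H u w where s: "s = (x, H, u, w)"
    by (cases s) auto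
  have "(x, H) \<in> set_pmf S" and "u \<in> set_pmf (act_prof g t H)"
    using assms by (auto simp: s step_of_def)
  then show "(fst s, fst (snd s)) \<in> set_pmf S"
    and "fst (snd (snd s)) j \<in> set_pmf (g t j (fst (snd s) j))"
    by (simp_all add: s set_pmf_act_prof)
qed

lemma set_pmf_join_prof:
  assumes "behav_strat A T i gi" and "\<And>t j h. t \<in> {1..T} \<Longrightarrow> j \<noteq> i \<Longrightarrow> set_pmf (gm t j h) \<subseteq> A t j"
    and "t \<in> {1..T}"
  shows "set_pmf (join_prof i gi gm t j h) \<subseteq> A t j"
  using assms by (cases h) (auto simp: join_prof_def behav_strat_def)

lemma length_hist_step_at:
  fixes g :: "('i::finite,'h,'z,'u) profile"
  assumes "s \<in> set_pmf (step_at \<mu> \<nu> f g t)"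
  shows "length (snd (fst (snd s) j)) = t - 1"
  using set_pmf_step_of(1)[OF assms[unfolded step_at_def]] by (simp add: state_at_def length_hist_sd)

lemma reward_step_at_in_range:
  fixes g :: "('i::finite,'h,'z,'u) profile"
  assumes "game_wf f A actof T" and "t \<in> {1..T}" and "\<And>j h. set_pmf (g t j h) \<subseteq> A t j"
    and "s \<in> set_pmf (step_at \<mu> \<nu> f g t)"
  shows "reward f t i s \<in> {-1..1}"
proof -
  obtain x H u w where s: "s = (x, H, u, w)"
    by (cases s) auto
  have "u j \<in> A t j" for j
    using set_pmf_step_of(2)[OF assms(4)[unfolded step_at_def], of j] assms(3)[of j "H j"]
    unfolding s by auto
  then show ?thesis
    using assms(1,2) unfolding game_wf_def reward_def s by (fastforce split: prod.splits)
qed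

lemma expectation_reward_cond_step_at:
  fixes g :: "('i::finite,'h,'z,'u) profile"
  assumes "game_wf f A actof T" and "t \<in> {1..T}" and "\<And>j h. set_pmf (g t j h) \<subseteq> A t j"
    and "measure_pmf.prob (step_at \<mu> \<nu> f g t) B > 0"
  shows "measure_pmf.expectation (cond_pmf (step_at \<mu> \<nu> f g t) B) (reward f t i) \<in> {-1..1}"
  using assms set_cond_pmf[OF set_pmf_Int_nonempty_if_prob_pos[OF assms(4)]]
  by (intro expectation_pmf_atLeastAtMost reward_step_at_in_range) auto

section \<open>Information states from conditional laws of compressed steps\<close>

definition step_signal :: "('x,'i,'u,'w,'z) dynamics \<Rightarrow> nat \<Rightarrow> 'i \<Rightarrow> 'x \<times> 'c \<times> ('i \<Rightarrow> 'u) \<times> 'w \<Rightarrow> 'z" where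
  "step_signal f t i s = (case s of (x, _, u, w) \<Rightarrow> fst (snd (f t x u w)) i)"

definition step_reward :: "('x,'i,'u,'w,'z) dynamics \<Rightarrow> nat \<Rightarrow> 'i \<Rightarrow> 'x \<times> 'c \<times> ('i \<Rightarrow> 'u) \<times> 'w \<Rightarrow> real" where
  "step_reward f t i s = (case s of (x, _, u, w) \<Rightarrow> snd (snd (f t x u w)) i)"

definition compress_others ::
    "('i \<Rightarrow> 'h \<Rightarrow> 'k) \<Rightarrow> (nat \<Rightarrow> 'i \<Rightarrow> 'k \<Rightarrow> 'z \<Rightarrow> 'k) \<Rightarrow> 'i \<Rightarrow> ('i \<Rightarrow> ('h,'z) hist) \<Rightarrow> 'i \<Rightarrow> 'k" where
  "compress_others \<iota>1 \<iota> i H = restrict (\<lambda>j. compress \<iota>1 \<iota> j (H j)) (- {i})"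

definition compressed_step ::
    "('i \<Rightarrow> 'h \<Rightarrow> 'k) \<Rightarrow> (nat \<Rightarrow> 'i \<Rightarrow> 'k \<Rightarrow> 'z \<Rightarrow> 'k) \<Rightarrow> 'i
      \<Rightarrow> 'x \<times> ('i \<Rightarrow> ('h,'z) hist) \<times> ('i \<Rightarrow> 'u) \<times> 'w \<Rightarrow> 'x \<times> ('i \<Rightarrow> 'k) \<times> ('i \<Rightarrow> 'u) \<times> 'w" where
  "compressed_step \<iota>1 \<iota> i s = (case s of (x, H, u, w) \<Rightarrow> (x, compress_others \<iota>1 \<iota> i H, u, w))"

lemma compress_next_hist:
  assumes "length (snd (H i)) + 1 = t"
  shows "compress \<iota>1 \<iota> i (next_hist f t i (x, H, u, w))
    = \<iota> (Suc t) i (compress \<iota>1 \<iota> i (H i)) (step_signal f t i (x, H, u, w))"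
  using assms
  by (simp add: next_hist_def next_state_def compress_def step_signal_def compr_aux_snoc
      split: prod.splits)

lemma step_signal_compressed_step [simp]:
  "step_signal f t i (compressed_step \<iota>1 \<iota> i' s) = step_signal f t i s"
  by (simp add: step_signal_def compressed_step_def split: prod.splits)

lemma reward_eq_step_reward_compressed_step:
  "reward f t i = step_reward f t i \<circ> compressed_step \<iota>1 \<iota> i'"
  by (auto simp: fun_eq_iff reward_def step_reward_def compressed_step_def split: prod.splits)

lemma prob_next_compress_cond_step_at:
  fixes g :: "('i::finite,'h,'z,'u) profile"
  assumes "t \<ge> 1" and pos: "measure_pmf.prob (step_at \<mu> \<nu> f g t) B > 0"
    and B: "B \<subseteq> {s. fst (snd s) i = h}"
  shows "measure_pmf.prob (cond_pmf (step_at \<mu> \<nu> f g t) B) {s. compress \<iota>1 \<iota> i (next_hist f t i s) = k'}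
    = pmf (map_pmf (\<iota> (Suc t) i (compress \<iota>1 \<iota> i h) \<circ> step_signal f t i)
        (map_pmf (compressed_step \<iota>1 \<iota> i) (cond_pmf (step_at \<mu> \<nu> f g t) B))) k'"
proof -
  have "measure_pmf.prob (cond_pmf (step_at \<mu> \<nu> f g t) B) {s. compress \<iota>1 \<iota> i (next_hist f t i s) = k'}
    = pmf (map_pmf (\<lambda>s. compress \<iota>1 \<iota> i (next_hist f t i s)) (cond_pmf (step_at \<mu> \<nu> f g t) B)) k'"
    by (simp add: pmf_map vimage_def)
  also have "map_pmf (\<lambda>s. compress \<iota>1 \<iota> i (next_hist f t i s)) (cond_pmf (step_at \<mu> \<nu> f g t) B)
    = map_pmf (\<iota> (Suc t) i (compress \<iota>1 \<iota> i h) \<circ> step_signal f t i)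
        (map_pmf (compressed_step \<iota>1 \<iota> i) (cond_pmf (step_at \<mu> \<nu> f g t) B))"
  proof (unfold pmf.map_comp, rule map_pmf_cong)
    fix s
    assume "s \<in> set_pmf (cond_pmf (step_at \<mu> \<nu> f g t) B)"
    then have "s \<in> set_pmf (step_at \<mu> \<nu> f g t)" and "fst (snd s) i = h"
      using set_cond_pmf[OF set_pmf_Int_nonempty_if_prob_pos[OF pos]] B by auto
    moreover obtain x H u w where "s = (x, H, u, w)"
      by (cases s) auto
    ultimately show "compress \<iota>1 \<iota> i (next_hist f t i s)
        = (\<iota> (Suc t) i (compress \<iota>1 \<iota> i h) \<circ> step_signal f t i \<circ> compressed_step \<iota>1 \<iota> i) s"
      using \<open>t \<ge> 1\<close> length_hist_step_at[of s \<mu> \<nu> f g t i] by (simp add: compress_next_hist)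
  qed simp
  finally show ?thesis .
qed

lemma info_state_if_compressed_step_law:
  fixes \<mu> :: "('x \<times> ('i::finite \<Rightarrow> 'h)) pmf" and \<nu> :: "nat \<Rightarrow> 'w pmf"
    and f :: "('x,'i,'u,'w,'z) dynamics" and gm :: "('i,'h,'z,'u) profile"
    and \<Psi> :: "nat \<Rightarrow> 'k \<Rightarrow> 'u \<Rightarrow> ('x \<times> ('i \<Rightarrow> 'k) \<times> ('i \<Rightarrow> 'u) \<times> 'w) pmf"
  assumes wf: "game_wf f A actof T"
    and gm: "\<And>t j h. t \<in> {1..T} \<Longrightarrow> j \<noteq> i \<Longrightarrow> set_pmf (gm t j h) \<subseteq> A t j"
    and law: "\<And>gi t h a. behav_strat A T i gi \<Longrightarrow> t \<in> {1..T} \<Longrightarrow>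
      measure_pmf.prob (step_at \<mu> \<nu> f (join_prof i gi gm) t)
        {s. fst (snd s) i = h \<and> fst (snd (snd s)) i = a} > 0 \<Longrightarrow>
      map_pmf (compressed_step \<iota>1 \<iota> i)
        (cond_pmf (step_at \<mu> \<nu> f (join_prof i gi gm) t) {s. fst (snd s) i = h \<and> fst (snd (snd s)) i = a})
      = \<Psi> t (compress \<iota>1 \<iota> i h) a"
  shows "info_state \<mu> \<nu> f A T \<iota>1 \<iota> i gm"
proof -
  define P where "P t k a = map_pmf (\<iota> (Suc t) i k \<circ> step_signal f t i) (\<Psi> t k a)" for t k a
  \<comment> \<open>Clamped only to make r range in [-1, 1] also at pairs (k, a) that are never reached.\<close>
  define r where "r t k a = max (-1) (min 1 (measure_pmf.expectation (\<Psi> t k a) (step_reward f t i)))"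
    for t k a
  show ?thesis
    unfolding info_state_def Let_def
  proof (intro exI[of _ P] exI[of _ r] conjI allI impI ballI)
    show "r t k a \<in> {-1..1}" for t k a
      by (simp add: r_def)
  next
    fix gi t h a k'
    assume gi: "behav_strat A T i gi" and t: "t \<in> {1..T}"
      and pos: "0 < measure_pmf.prob (step_at \<mu> \<nu> f (join_prof i gi gm) t)
        {s. fst (snd s) i = h \<and> fst (snd (snd s)) i = a}"
    show "measure_pmf.prob (cond_pmf (step_at \<mu> \<nu> f (join_prof i gi gm) t)
        {s. fst (snd s) i = h \<and> fst (snd (snd s)) i = a}) {s. compress \<iota>1 \<iota> i (next_hist f t i s) = k'}
      = pmf (P t (compress \<iota>1 \<iota> i h) a) k'"
      using t by (subst prob_next_compress_cond_step_at[OF _ pos]) (auto simp: law[OF gi t pos] P_def)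
  next
    fix gi t h a
    let ?D = "step_at \<mu> \<nu> f (join_prof i gi gm) t"
      and ?B = "{s :: 'x \<times> ('i \<Rightarrow> ('h,'z) hist) \<times> ('i \<Rightarrow> 'u) \<times> 'w.
        fst (snd s) i = h \<and> fst (snd (snd s)) i = a}"
    assume gi: "behav_strat A T i gi" and t: "t \<in> {1..T}" and pos: "0 < measure_pmf.prob ?D ?B"
    have "measure_pmf.expectation (cond_pmf ?D ?B) (reward f t i) \<in> {-1..1}"
      using set_pmf_join_prof[OF gi gm t] by (rule expectation_reward_cond_step_at[OF wf t _ pos])
    moreover have "measure_pmf.expectation (cond_pmf ?D ?B) (reward f t i)
        = measure_pmf.expectation (\<Psi> t (compress \<iota>1 \<iota> i h) a) (step_reward f t i)"
      by (simp add: reward_eq_step_reward_compressed_step[of _ _ _ \<iota>1 \<iota> i]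
          law[OF gi t pos, symmetric] comp_def)
    ultimately show "measure_pmf.expectation (cond_pmf ?D ?B) (reward f t i) = r t (compress \<iota>1 \<iota> i h) a"
      by (simp add: r_def)
  qed
qed

section \<open>Conditional law of a step against compression-based strategies\<close>

definition compressed_step_kernel ::
    "(nat \<Rightarrow> 'w pmf) \<Rightarrow> (nat \<Rightarrow> 'i \<Rightarrow> 'k \<Rightarrow> 'u pmf) \<Rightarrow> 'i \<Rightarrow> nat \<Rightarrow> 'u
      \<Rightarrow> 'x \<times> ('i \<Rightarrow> 'k) \<Rightarrow> ('x \<times> ('i \<Rightarrow> 'k) \<times> ('i \<Rightarrow> 'u) \<times> 'w) pmf" where
  "compressed_step_kernel \<nu> \<rho> i t a v = (case v of (x, kk) \<Rightarrow>
     bind_pmf (Pi_pmf (- {i}) undefined (\<lambda>j. \<rho> t j (kk j)))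
       (\<lambda>u. map_pmf (\<lambda>w. (x, kk, u(i := a), w)) (\<nu> t)))"

lemma act_prof_join_kprof:
  fixes i :: "'i::finite"
  shows "act_prof (join_prof i gi (kprof \<iota>1 \<iota> \<rho>)) t H =
    map_pmf (\<lambda>(a, u). u(i := a))
      (pair_pmf (gi t (H i)) (Pi_pmf (- {i}) undefined (\<lambda>j. \<rho> t j (compress_others \<iota>1 \<iota> i H j))))"
proof -
  let ?g = "join_prof i gi (kprof \<iota>1 \<iota> \<rho>)"
  have "act_prof ?g t H = Pi_pmf (insert i (- {i})) undefined (\<lambda>j. ?g t j (H j))"
    by (simp add: act_prof_def insert_absorb Compl_eq_Diff_UNIV)
  also have "\<dots> = map_pmf (\<lambda>(a, u). u(i := a))
      (pair_pmf (?g t i (H i)) (Pi_pmf (- {i}) undefined (\<lambda>j. ?g t j (H j))))"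
    by (rule Pi_pmf_insert) auto
  also have "Pi_pmf (- {i}) undefined (\<lambda>j. ?g t j (H j))
      = Pi_pmf (- {i}) undefined (\<lambda>j. \<rho> t j (compress_others \<iota>1 \<iota> i H j))"
    by (rule Pi_pmf_cong) (auto simp: join_prof_def kprof_def compress_others_def)
  finally show ?thesis
    by (simp add: join_prof_def fun_upd_def)
qed

definition step_kernel ::
    "(nat \<Rightarrow> 'w pmf) \<Rightarrow> ('i,'h,'z,'u) profile \<Rightarrow> nat \<Rightarrow> 'x \<times> ('i \<Rightarrow> ('h,'z) hist)
      \<Rightarrow> ('x \<times> ('i \<Rightarrow> ('h,'z) hist) \<times> ('i \<Rightarrow> 'u) \<times> 'w) pmf" where
  "step_kernel \<nu> g t = (\<lambda>(x, H). bind_pmf (act_prof g t H) (\<lambda>u. map_pmf (\<lambda>w. (x, H, u, w)) (\<nu> t)))"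

lemma step_of_eq_bind_step_kernel: "step_of \<nu> g t S = bind_pmf S (step_kernel \<nu> g t)"
  by (simp add: step_of_def step_kernel_def)

lemma map_step_kernel_join_kprof:
  fixes i :: "'i::finite"
  shows "map_pmf (\<lambda>s. (fst (snd (snd s)) i, compressed_step \<iota>1 \<iota> i s))
      (step_kernel \<nu> (join_prof i gi (kprof \<iota>1 \<iota> \<rho>)) t (x, H))
    = bind_pmf (gi t (H i))
        (\<lambda>a. map_pmf (Pair a) (compressed_step_kernel \<nu> \<rho> i t a (x, compress_others \<iota>1 \<iota> i H)))"
  by (simp add: step_kernel_def act_prof_join_kprof compressed_step_def compressed_step_kernel_def
      map_pmf_def pair_pmf_def bind_assoc_pmf bind_return_pmf)

lemma emeasure_step_kernel_join_kprof:
  fixes i :: "'i::finite"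
  shows "emeasure (step_kernel \<nu> (join_prof i gi (kprof \<iota>1 \<iota> \<rho>)) t s)
      ({s. fst (snd s) i = h \<and> fst (snd (snd s)) i = a} \<inter> compressed_step \<iota>1 \<iota> i -` G)
    = ennreal (pmf (gi t h) a) * indicator {s. snd s i = h} s
      * emeasure (compressed_step_kernel \<nu> \<rho> i t a (fst s, compress_others \<iota>1 \<iota> i (snd s))) G"
proof -
  obtain x H where s: "s = (x, H)"
    by (cases s)
  let ?\<kappa> = "step_kernel \<nu> (join_prof i gi (kprof \<iota>1 \<iota> \<rho>)) t (x, H)"
  let ?F = "\<lambda>s. (fst (snd (snd s)) i, compressed_step \<iota>1 \<iota> i s)"
  let ?Q = "\<lambda>a. compressed_step_kernel \<nu> \<rho> i t a (x, compress_others \<iota>1 \<iota> i H)"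
  show ?thesis
  proof (cases "H i = h")
    case False
    then show ?thesis
      by (simp add: s step_kernel_def)
  next
    case True
    have "emeasure ?\<kappa> ({s. fst (snd s) i = h \<and> fst (snd (snd s)) i = a} \<inter> compressed_step \<iota>1 \<iota> i -` G)
        = emeasure ?\<kappa> (?F -` ({a} \<times> G))"
      by (rule emeasure_eq_AE) (auto simp: AE_measure_pmf_iff step_kernel_def True)
    also have "\<dots> = emeasure (bind_pmf (gi t h) (\<lambda>a'. map_pmf (Pair a') (?Q a'))) ({a} \<times> G)"
      unfolding True[symmetric] map_step_kernel_join_kprof[symmetric] by simp
    also have "\<dots> = (\<integral>\<^sup>+a'. indicator {a} a' * emeasure (?Q a) G \<partial>gi t h)"
      by (auto intro!: nn_integral_cong simp: indicator_def vimage_def)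
    also have "\<dots> = ennreal (pmf (gi t h) a) * emeasure (?Q a) G"
      by (simp add: nn_integral_multc emeasure_pmf_single)
    finally show ?thesis
      using True by (simp add: s)
  qed
qed

lemma map_cond_step_of_join_kprof:
  fixes i :: "'i::finite" and S :: "('x \<times> ('i \<Rightarrow> ('h,'z) hist)) pmf"
  assumes "measure_pmf.prob (step_of \<nu> (join_prof i gi (kprof \<iota>1 \<iota> \<rho>)) t S)
      {s. fst (snd s) i = h \<and> fst (snd (snd s)) i = a} > 0"
  shows "map_pmf (compressed_step \<iota>1 \<iota> i) (cond_pmf (step_of \<nu> (join_prof i gi (kprof \<iota>1 \<iota> \<rho>)) t S)
      {s. fst (snd s) i = h \<and> fst (snd (snd s)) i = a})
    = bind_pmf (map_pmf (\<lambda>s. (fst s, compress_others \<iota>1 \<iota> i (snd s))) (cond_pmf S {s. snd s i = h}))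
        (compressed_step_kernel \<nu> \<rho> i t a)"
  using set_pmf_Int_nonempty_if_prob_pos[OF assms] unfolding step_of_eq_bind_step_kernel
  by (intro map_cond_pmf_bind_pmf[where c = "ennreal (pmf (gi t h) a)"] emeasure_step_kernel_join_kprof)

definition compressed_belief ::
    "('x \<times> ('i \<Rightarrow> 'h)) pmf \<Rightarrow> (nat \<Rightarrow> 'w pmf) \<Rightarrow> ('x,'i,'u,'w,'z) dynamics \<Rightarrow> (nat \<Rightarrow> 'i \<Rightarrow> 'u set)
      \<Rightarrow> nat \<Rightarrow> ('i \<Rightarrow> 'h \<Rightarrow> 'k) \<Rightarrow> (nat \<Rightarrow> 'i \<Rightarrow> 'k \<Rightarrow> 'z \<Rightarrow> 'k) \<Rightarrow> 'i \<Rightarrow> (nat \<Rightarrow> 'i \<Rightarrow> 'k \<Rightarrow> 'u pmf)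
      \<Rightarrow> (nat \<Rightarrow> 'k \<Rightarrow> ('x \<times> ('i \<Rightarrow> 'k)) pmf) \<Rightarrow> bool" where
  "compressed_belief \<mu> \<nu> f A T \<iota>1 \<iota> i \<rho> \<Phi> \<longleftrightarrow>
    (\<forall>gi. behav_strat A T i gi \<longrightarrow>
      (\<forall>t\<in>{1..T}. \<forall>h.
         let S = state_at \<mu> \<nu> f (join_prof i gi (kprof \<iota>1 \<iota> \<rho>)) t;
             B = {s. snd s i = h}
         in measure_pmf.prob S B > 0 \<longrightarrow>
            (\<forall>x kk. measure_pmf.prob (cond_pmf S B)
                 {s. fst s = x \<and> compress_others \<iota>1 \<iota> i (snd s) = kk}
               = pmf (\<Phi> t (compress \<iota>1 \<iota> i h)) (x, kk))))"

lemma info_state_if_compressed_belief: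
  fixes \<mu> :: "('x \<times> ('i::finite \<Rightarrow> 'h)) pmf" and \<nu> :: "nat \<Rightarrow> 'w pmf"
    and f :: "('x,'i,'u,'w,'z) dynamics" and \<rho> :: "nat \<Rightarrow> 'i \<Rightarrow> 'k \<Rightarrow> 'u pmf"
  assumes wf: "game_wf f A actof T" and kb: "kbased_others A T i \<rho>"
    and \<Phi>: "compressed_belief \<mu> \<nu> f A T \<iota>1 \<iota> i \<rho> \<Phi>"
  shows "info_state \<mu> \<nu> f A T \<iota>1 \<iota> i (kprof \<iota>1 \<iota> \<rho>)"
proof (rule info_state_if_compressed_step_law[OF wf,
      where \<Psi> = "\<lambda>t k a. bind_pmf (\<Phi> t k) (compressed_step_kernel \<nu> \<rho> i t a)"])
  show "set_pmf (kprof \<iota>1 \<iota> \<rho> t j h) \<subseteq> A t j" if "t \<in> {1..T}" and "j \<noteq> i" for t j h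
    using kb that by (auto simp: kbased_others_def kprof_def)
next
  fix gi t h a
  let ?S = "state_at \<mu> \<nu> f (join_prof i gi (kprof \<iota>1 \<iota> \<rho>)) t"
  assume gi: "behav_strat A T i gi" and t: "t \<in> {1..T}"
    and pos: "measure_pmf.prob (step_at \<mu> \<nu> f (join_prof i gi (kprof \<iota>1 \<iota> \<rho>)) t)
      {s. fst (snd s) i = h \<and> fst (snd (snd s)) i = a} > 0"
  then obtain s where "s \<in> set_pmf (step_of \<nu> (join_prof i gi (kprof \<iota>1 \<iota> \<rho>)) t ?S)"
    and "fst (snd s) i = h"
    unfolding step_at_def by (blast dest: set_pmf_Int_nonempty_if_prob_pos)
  then have "measure_pmf.prob ?S {s. snd s i = h} > 0"
    by (intro measure_pmf_posI[OF set_pmf_step_of(1)]) auto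
  then have "\<forall>x kk. measure_pmf.prob (cond_pmf ?S {s. snd s i = h})
      {s. fst s = x \<and> compress_others \<iota>1 \<iota> i (snd s) = kk} = pmf (\<Phi> t (compress \<iota>1 \<iota> i h)) (x, kk)"
    using \<Phi> gi t unfolding compressed_belief_def Let_def by blast
  then have "map_pmf (\<lambda>s. (fst s, compress_others \<iota>1 \<iota> i (snd s))) (cond_pmf ?S {s. snd s i = h})
      = \<Phi> t (compress \<iota>1 \<iota> i h)"
    by (intro pmf_eqI) (auto simp: pmf_map vimage_def)
  then show "map_pmf (compressed_step \<iota>1 \<iota> i) (cond_pmf (step_at \<mu> \<nu> f (join_prof i gi (kprof \<iota>1 \<iota> \<rho>)) t)
      {s. fst (snd s) i = h \<and> fst (snd (snd s)) i = a})
    = bind_pmf (\<Phi> t (compress \<iota>1 \<iota> i h)) (compressed_step_kernel \<nu> \<rho> i t a)"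
    using map_cond_step_of_join_kprof[OF pos[unfolded step_at_def]] by (simp add: step_at_def)
qed

theorem lemma1:
  fixes \<mu> :: "('x::finite \<times> ('i::finite \<Rightarrow> 'h::finite)) pmf"
    and \<nu> :: "nat \<Rightarrow> 'w::finite pmf"
    and f :: "('x,'i,'u::finite,'w,'z::finite) dynamics"
    and A :: "nat \<Rightarrow> 'i \<Rightarrow> 'u set"
    and actof :: "nat \<Rightarrow> 'i \<Rightarrow> 'z \<Rightarrow> 'u"
    and T :: nat
    and \<iota>1 :: "'i \<Rightarrow> 'h \<Rightarrow> 'k::finite"
    and \<iota> :: "nat \<Rightarrow> 'i \<Rightarrow> 'k \<Rightarrow> 'z \<Rightarrow> 'k"
  assumes wf: "game_wf f A actof T"
    and hyp: "\<forall>i \<rho>. kbased_others A T i \<rho> \<longrightarrow>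
      (\<exists>\<Phi> :: nat \<Rightarrow> 'k \<Rightarrow> ('x \<times> ('i \<Rightarrow> 'k)) pmf.
         \<forall>gi. behav_strat A T i gi \<longrightarrow>
           (\<forall>t\<in>{1..T}. \<forall>h.
              let S = state_at \<mu> \<nu> f (join_prof i gi (kprof \<iota>1 \<iota> \<rho>)) t;
                  B = {s. snd s i = h}
              in measure_pmf.prob S B > 0 \<longrightarrow>
                 (\<forall>x kk. measure_pmf.prob (cond_pmf S B)
                      {s. fst s = x \<and> restrict (\<lambda>j. compress \<iota>1 \<iota> j (snd s j)) (- {i}) = kk}
                    = pmf (\<Phi> t (compress \<iota>1 \<iota> i h)) (x, kk))))"
  shows "mutually_sufficient \<mu> \<nu> f A T \<iota>1 \<iota>"
  unfolding mutually_sufficient_def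
proof (intro allI impI)
  fix i and \<rho> :: "nat \<Rightarrow> 'i \<Rightarrow> 'k \<Rightarrow> 'u pmf"
  assume kb: "kbased_others A T i \<rho>"
  with hyp obtain \<Phi> where "compressed_belief \<mu> \<nu> f A T \<iota>1 \<iota> i \<rho> \<Phi>"
    unfolding compressed_belief_def compress_others_def by blast
  with wf kb show "info_state \<mu> \<nu> f A T \<iota>1 \<iota> i (kprof \<iota>1 \<iota> \<rho>)"
    by (rule info_state_if_compressed_belief)
qed

end
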